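(* Let $m,n$ be positive integers and $j$ a non-negative integer such that $m\leq n$ and $j<n$. Then $$|\mathrm{Hom}^{j}(P_m,P_n)| = \sum_{t=\max\left\{0,\left\lceil\frac{j-(n-m)}{2}\right\rceil\right\}}^{\left\lceil\frac{m+j}{2}\right\rceil-1}\binom{m-1}{t} - \sum_{t=0}^{\left\lfloor\frac{j-(n-m)}{2}\right\rfloor-1}\binom{m-1}{t} -\sum_{t=0}^{\left\lfloor\frac{m-j-1}{2}\right\rfloor-1}\binom{m-1}{t}.$$
   Context: For a positive integer $n$, $P_n$ denotes the path with vertex set $\{0,1,\dots,n-1\}$ and edge set $\{\{i,i+1\} : i=0,\dots,n-2\}$. A homomorphism from a graph $G$ to a graph $H$ is a map $f:V(G)\to V(H)$ with $\{f(x),f(y)\}\in E(H)$ for every edge $\{x,y\}\in E(G)$. $\mathrm{Hom}^{j}(P_m,P_n)$ denotes the set of homomorphisms $f:P_m\to P_n$ with $f(0)=j$. A sum whose upper limit is smaller than its lower limit is zero, and $\binom{a}{b}=0$ if $b<0$ or $b>a$. *)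

theory Defs
  imports Complex_Main "HOL-Library.FuncSet"
begin

definition path_verts :: "nat \<Rightarrow> nat set" where
  "path_verts n = {0..<n}"

definition path_edges :: "nat \<Rightarrow> nat set set" where
  "path_edges n = {{i, i + 1} | i. i + 1 < n}"

definition path_hom :: "nat \<Rightarrow> nat \<Rightarrow> (nat \<Rightarrow> nat) set" where
  "path_hom m n = {f \<in> path_verts m \<rightarrow>\<^sub>E path_verts n.
      \<forall>x y. {x, y} \<in> path_edges m \<longrightarrow> {f x, f y} \<in> path_edges n}"

definition path_hom_at :: "nat \<Rightarrow> nat \<Rightarrow> nat \<Rightarrow> (nat \<Rightarrow> nat) set" where
  "path_hom_at j m n = {f \<in> path_hom m n. f 0 = j}"

end

theory Submission
  imports Defs
begin

text \<open>A homomorphism \<open>P\<^sub>m \<rightarrow> P\<^sub>n\<close> with \<open>f 0 = j\<close> is a \<open>\<plusminus>1\<close> walk of \<open>m - 1\<close> steps from \<open>j\<close>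
  that avoids the walls \<open>-1\<close> and \<open>n\<close>. By the reflection principle, the walks from height \<open>a\<close>
  touching \<open>-1\<close> are counted by two prefix sums of a row of Pascal's triangle; as \<open>m \<le> n\<close>, no walk
  touches both walls, so inclusion-exclusion counts the homomorphisms. The closed form is
  verified by showing that it obeys the recurrence \<open>N(k + 1, j) = N(k, j - 1) + N(k, j + 1)\<close>
  with the right boundary values; the identity
  \<open>(\<Sum>t<c. C(k, t)) + (\<Sum>t<k + 1 - c. C(k, t)) = 2\<^sup>k\<close> then turns it into the stated form.\<close>

definition choose_prefix_sum :: "nat \<Rightarrow> int \<Rightarrow> int" where
  "choose_prefix_sum k c = (\<Sum>t<nat c. int (k choose t))"

lemma choose_prefix_sum_nonpos: "c \<le> 0 \<Longrightarrow> choose_prefix_sum k c = 0"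
  by (simp add: choose_prefix_sum_def)

lemma choose_prefix_sum_pascal:
  "choose_prefix_sum (Suc k) c = choose_prefix_sum k c + choose_prefix_sum k (c - 1)"
proof (cases "nat c")
  case 0
  then show ?thesis by (simp add: choose_prefix_sum_def)
next
  case (Suc M)
  then have "nat (c - 1) = M" by simp
  have "(\<Sum>t<Suc M. Suc k choose t) = 1 + (\<Sum>t<M. (k choose t) + (k choose Suc t))"
    by (simp only: sum.lessThan_Suc_shift binomial_Suc_Suc) simp
  also have "\<dots> = (\<Sum>t<M. k choose t) + (\<Sum>t<Suc M. k choose t)"
    by (simp only: sum.distrib sum.lessThan_Suc_shift) simp
  finally show ?thesis
    using Suc \<open>nat (c - 1) = M\<close> unfolding choose_prefix_sum_def by (simp flip: of_nat_sum)
qed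

lemma choose_prefix_sum_complement:
  "choose_prefix_sum k c + choose_prefix_sum k (int k + 1 - c) = 2 ^ k"
proof (induction k arbitrary: c)
  case 0
  have "choose_prefix_sum 0 c = (if c \<ge> 1 then 1 else 0)" for c
    by (cases "nat c") (simp_all add: choose_prefix_sum_def sum.lessThan_Suc_shift del: sum.lessThan_Suc)
  then show ?case by simp
next
  case (Suc k)
  have "choose_prefix_sum (Suc k) c + choose_prefix_sum (Suc k) (int (Suc k) + 1 - c)
     = (choose_prefix_sum k c + choose_prefix_sum k (int k + 1 - c))
       + (choose_prefix_sum k (c - 1) + choose_prefix_sum k (int k + 1 - (c - 1)))"
    by (simp add: choose_prefix_sum_pascal algebra_simps)
  then show ?case using Suc.IH[of c] Suc.IH[of "c - 1"] by simp
qed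

lemma sum_choose_Icc:
  assumes "a \<le> b"
  shows "(\<Sum>t\<in>{max 0 a..b - 1}. int (k choose nat t)) = choose_prefix_sum k b - choose_prefix_sum k a"
proof -
  have "{max 0 a..b - 1} = {int (nat a)..<int (nat b)}"
    using assms by auto
  then have "(\<Sum>t\<in>{max 0 a..b - 1}. int (k choose nat t)) = (\<Sum>i\<in>{nat a..<nat b}. int (k choose i))"
    by (simp only: sum.atLeast_int_lessThan_int_shift comp_def nat_int)
  also have "\<dots> = choose_prefix_sum k b - choose_prefix_sum k a"
    using assms unfolding choose_prefix_sum_def lessThan_atLeast0
    by (simp add: sum.atLeastLessThan_concat[of 0 "nat a" "nat b", symmetric] nat_mono)
  finally show ?thesis .
qed

lemma sum_choose_Icc0: "(\<Sum>t\<in>{0..c - 1}. int (k choose nat t)) = choose_prefix_sum k c"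
  using sum_choose_Icc[of 0 c k] by (cases "c \<le> 0") (simp_all add: choose_prefix_sum_nonpos)

text \<open>The number of \<open>k\<close>-step \<open>\<plusminus>1\<close> walks from height \<open>a \<ge> -1\<close> that touch \<open>-1\<close>: those ending
  below \<open>-1\<close> are counted twice (once reflected), those ending at \<open>-1\<close> once.\<close>

definition barrier_hits :: "nat \<Rightarrow> int \<Rightarrow> int" where
  "barrier_hits k a =
     choose_prefix_sum k ((int k - a + 1) div 2) + choose_prefix_sum k ((int k - a) div 2)"

lemma barrier_hits_Suc: "barrier_hits (Suc k) a = barrier_hits k (a - 1) + barrier_hits k (a + 1)"
proof -
  have "(int k - a + 2) div 2 - 1 = (int k - a) div 2" "(int k - a + 1) div 2 - 1 = (int k - a - 1) div 2"
    by presburger+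
  then show ?thesis
    unfolding barrier_hits_def by (simp add: choose_prefix_sum_pascal algebra_simps)
qed

lemma barrier_hits_at_barrier: "barrier_hits k (-1) = 2 ^ k"
proof -
  have "barrier_hits k (-1) = choose_prefix_sum k ((int k + 2) div 2) + choose_prefix_sum k ((int k + 1) div 2)"
    unfolding barrier_hits_def by (simp add: add.commute)
  also have "(int k + 1) div 2 = int k + 1 - (int k + 2) div 2" by presburger
  also have "choose_prefix_sum k ((int k + 2) div 2) + choose_prefix_sum k (int k + 1 - (int k + 2) div 2) = 2 ^ k"
    by (rule choose_prefix_sum_complement)
  finally show ?thesis .
qed

lemma barrier_hits_unreachable: "int k \<le> a \<Longrightarrow> barrier_hits k a = 0"
  unfolding barrier_hits_def by (simp add: choose_prefix_sum_nonpos)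

text \<open>The number of \<open>k\<close>-step walks staying strictly between two walls at distances \<open>a + 1\<close>
  below and \<open>b + 1\<close> above the start, when \<open>k\<close> is too short to touch both walls.\<close>

definition strip_walks :: "nat \<Rightarrow> int \<Rightarrow> int \<Rightarrow> int" where
  "strip_walks k a b = 2 ^ k - barrier_hits k a - barrier_hits k b"

lemma strip_walks_Suc:
  "strip_walks (Suc k) a b = strip_walks k (a - 1) (b + 1) + strip_walks k (a + 1) (b - 1)"
  unfolding strip_walks_def by (simp add: barrier_hits_Suc algebra_simps)

definition adjacent :: "nat \<Rightarrow> nat \<Rightarrow> bool" where
  "adjacent a b \<longleftrightarrow> b = Suc a \<or> a = Suc b"

lemma path_edges_iff: "{x, y} \<in> path_edges n \<longleftrightarrow> adjacent x y \<and> x < n \<and> y < n"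
  unfolding path_edges_def adjacent_def by (auto simp: doubleton_eq_iff)

lemma path_hom_at_eq:
  "path_hom_at j m n =
     {f \<in> {0..<m} \<rightarrow>\<^sub>E {0..<n}. f 0 = j \<and> (\<forall>i. Suc i < m \<longrightarrow> adjacent (f i) (f (Suc i)))}"
proof -
  have "(\<forall>x y. {x, y} \<in> path_edges m \<longrightarrow> {f x, f y} \<in> path_edges n) \<longleftrightarrow>
        (\<forall>i. Suc i < m \<longrightarrow> adjacent (f i) (f (Suc i)))"
    if "f \<in> {0..<m} \<rightarrow>\<^sub>E {0..<n}" for f
    using that by (auto simp: path_edges_iff adjacent_def PiE_iff) (metis Suc_lessD)+
  then show ?thesis
    unfolding path_hom_at_def path_hom_def path_verts_def by blast
qed

lemma finite_path_hom_at: "finite (path_hom_at j m n)"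
  by (rule finite_subset[of _ "{0..<m} \<rightarrow>\<^sub>E {0..<n}"]) (auto simp: path_hom_at_eq finite_PiE)

lemma path_hom_at_out_of_range: "n \<le> j \<Longrightarrow> path_hom_at j (Suc k) n = {}"
  by (auto simp: path_hom_at_eq PiE_iff intro: bexI[of _ 0])

lemma card_path_hom_at_1: "j < n \<Longrightarrow> card (path_hom_at j 1 n) = 1"
proof -
  assume "j < n"
  then have "path_hom_at j 1 n = {(\<lambda>x. if x = 0 then j else undefined)}"
    by (auto simp: path_hom_at_eq PiE_iff extensional_def fun_eq_iff)
  then show ?thesis by simp
qed

lemma card_path_hom_at_second_vertex:
  assumes "j < n" "adjacent j j'"
  shows "card {f \<in> path_hom_at j (Suc (Suc k)) n. f 1 = j'} = card (path_hom_at j' (Suc k) n)"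
proof (rule bij_betw_same_card)
  let ?tail = "\<lambda>f x. if x < Suc k then f (Suc x) else undefined"
  let ?cons = "\<lambda>g x. if x = 0 then j else if x < Suc (Suc k) then g (x - 1) else undefined"
  show "bij_betw ?tail {f \<in> path_hom_at j (Suc (Suc k)) n. f 1 = j'} (path_hom_at j' (Suc k) n)"
  proof (rule bij_betw_byWitness[where f' = ?cons])
    show "\<forall>f \<in> {f \<in> path_hom_at j (Suc (Suc k)) n. f 1 = j'}. ?cons (?tail f) = f"
      by (auto simp: path_hom_at_eq PiE_iff extensional_def fun_eq_iff)
    show "\<forall>g \<in> path_hom_at j' (Suc k) n. ?tail (?cons g) = g"
      by (auto simp: path_hom_at_eq PiE_iff extensional_def fun_eq_iff)
    show "?tail ` {f \<in> path_hom_at j (Suc (Suc k)) n. f 1 = j'} \<subseteq> path_hom_at j' (Suc k) n"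
      by (auto simp: path_hom_at_eq PiE_iff extensional_def)
    show "?cons ` path_hom_at j' (Suc k) n \<subseteq> {f \<in> path_hom_at j (Suc (Suc k)) n. f 1 = j'}"
    proof
      fix f assume "f \<in> ?cons ` path_hom_at j' (Suc k) n"
      then obtain g where g: "g \<in> path_hom_at j' (Suc k) n" and f: "f = ?cons g" by blast
      have "adjacent (f i) (f (Suc i))" if "Suc i < Suc (Suc k)" for i
        using g that assms(2) by (cases i) (auto simp: f path_hom_at_eq)
      then show "f \<in> {f \<in> path_hom_at j (Suc (Suc k)) n. f 1 = j'}"
        using g assms(1) by (auto simp: f path_hom_at_eq PiE_iff extensional_def)
    qed
  qed
qed

lemma card_path_hom_at_Suc_Suc:
  assumes "j < n"
  shows "card (path_hom_at j (Suc (Suc k)) n) =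
    (if j = 0 then 0 else card (path_hom_at (j - 1) (Suc k) n)) + card (path_hom_at (Suc j) (Suc k) n)"
proof -
  let ?P = "path_hom_at j (Suc (Suc k)) n"
  let ?down = "{f \<in> ?P. f 1 = j - 1 \<and> j \<noteq> 0}" and ?up = "{f \<in> ?P. f 1 = Suc j}"
  have "?P = ?down \<union> ?up"
    by (auto simp: path_hom_at_eq adjacent_def)
  then have "card ?P = card (?down \<union> ?up)"
    by (rule arg_cong)
  also have "\<dots> = card ?down + card ?up"
    by (rule card_Un_disjoint) (auto simp: finite_path_hom_at)
  finally show ?thesis
    using card_path_hom_at_second_vertex[of j n] assms by (simp add: adjacent_def)
qed

lemma card_path_hom_at_eq_strip_walks:
  assumes "j < n" "k < n"
  shows "int (card (path_hom_at j (Suc k) n)) = strip_walks k (int j) (int n - 1 - int j)"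
  using assms
proof (induction k arbitrary: j)
  case 0
  then show ?case
    using card_path_hom_at_1[of j n] by (simp add: strip_walks_def barrier_hits_unreachable)
next
  case (Suc k)
  have down: "int (if j = 0 then 0 else card (path_hom_at (j - 1) (Suc k) n)) =
      strip_walks k (int j - 1) (int n - 1 - int j + 1)"
    using Suc by (auto simp: of_nat_diff strip_walks_def barrier_hits_at_barrier barrier_hits_unreachable)
  have up: "int (card (path_hom_at (Suc j) (Suc k) n)) = strip_walks k (int j + 1) (int n - 1 - int j - 1)"
  proof (cases "Suc j < n")
    case True
    then show ?thesis using Suc.IH[of "Suc j"] Suc.prems by (simp add: algebra_simps)
  next
    case False
    then have "int n - 1 - int j - 1 = -1" "int k \<le> int j + 1" using Suc.prems by auto
    then show ?thesis
      using False by (simp add: path_hom_at_out_of_range strip_walks_def barrier_hits_at_barrier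
          barrier_hits_unreachable)
  qed
  show ?case
    using card_path_hom_at_Suc_Suc[of j n k] Suc.prems down up by (simp add: strip_walks_Suc)
qed

lemma card_path_hom_at_choose_prefix_sums:
  assumes "0 < m" "m \<le> n" "j < n"
  shows "int (card (path_hom_at j m n)) =
      choose_prefix_sum (m - 1) ((int m + int j + 1) div 2)
    - choose_prefix_sum (m - 1) ((int j + int m - int n + 1) div 2)
    - choose_prefix_sum (m - 1) ((int j + int m - int n) div 2)
    - choose_prefix_sum (m - 1) ((int m - int j - 1) div 2)"
proof -
  obtain k where m: "m = Suc k" using assms(1) gr0_conv_Suc by blast
  have "int k + 1 - (int k - int j + 1) div 2 = (int m + int j + 1) div 2"
    using m by simp
  then have top: "2 ^ k - choose_prefix_sum k ((int k - int j + 1) div 2) =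
      choose_prefix_sum k ((int m + int j + 1) div 2)"
    using choose_prefix_sum_complement[of k "(int k - int j + 1) div 2"] by simp
  have "int (card (path_hom_at j m n)) = strip_walks k (int j) (int n - 1 - int j)"
    using card_path_hom_at_eq_strip_walks[of j n k] assms m by simp
  also have "\<dots> = 2 ^ k - choose_prefix_sum k ((int k - int j + 1) div 2)
      - choose_prefix_sum k ((int j + int m - int n + 1) div 2)
      - choose_prefix_sum k ((int j + int m - int n) div 2)
      - choose_prefix_sum k ((int m - int j - 1) div 2)"
    unfolding strip_walks_def barrier_hits_def m by (simp add: algebra_simps)
  finally show ?thesis
    using top m by simp
qed

lemma ceiling_half_of_int: "\<lceil>real_of_int x / 2\<rceil> = (x + 1) div 2"
proof -
  have "- (- x div 2) = (x + 1) div 2" by presburger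
  then show ?thesis using ceiling_divide_eq_div[where 'a = real, of x 2] by simp
qed

lemma floor_half_of_int: "\<lfloor>real_of_int x / 2\<rfloor> = x div 2"
  using floor_divide_of_int_eq[of x 2] by simp

theorem corollary1:
  fixes m n j :: nat
  assumes "0 < m" and "0 < n" and "m \<le> n" and "j < n"
  shows "int (card (path_hom_at j m n)) =
      (\<Sum>t \<in> {max 0 \<lceil>(real j - (real n - real m)) / 2\<rceil> .. \<lceil>(real m + real j) / 2\<rceil> - 1}.
          int ((m - 1) choose nat t))
    - (\<Sum>t \<in> {0 .. \<lfloor>(real j - (real n - real m)) / 2\<rfloor> - 1}. int ((m - 1) choose nat t))
    - (\<Sum>t \<in> {0 .. \<lfloor>(real m - real j - 1) / 2\<rfloor> - 1}. int ((m - 1) choose nat t))"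
proof -
  have ceiling_low: "\<lceil>(real j - (real n - real m)) / 2\<rceil> = (int j + int m - int n + 1) div 2"
    using ceiling_half_of_int[of "int j + int m - int n"] by (simp add: algebra_simps)
  have ceiling_high: "\<lceil>(real m + real j) / 2\<rceil> = (int m + int j + 1) div 2"
    using ceiling_half_of_int[of "int m + int j"] by simp
  have floor_low: "\<lfloor>(real j - (real n - real m)) / 2\<rfloor> = (int j + int m - int n) div 2"
    using floor_half_of_int[of "int j + int m - int n"] by (simp add: algebra_simps)
  have floor_high: "\<lfloor>(real m - real j - 1) / 2\<rfloor> = (int m - int j - 1) div 2"
    using floor_half_of_int[of "int m - int j - 1"] by simp
  have "(int j + int m - int n + 1) div 2 \<le> (int m + int j + 1) div 2"
    by (simp add: zdiv_mono1)
  note window_sum = sum_choose_Icc[OF this]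
  show ?thesis
    unfolding ceiling_low ceiling_high floor_low floor_high sum_choose_Icc0 window_sum
      card_path_hom_at_choose_prefix_sums[OF assms(1,3,4)]
    by simp
qed

end
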